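(* Fix a run $r$ of a protocol $P$, a node $\theta=\langle i,t\rangle$, and a delay $\Delta>0$ (an integer). For each process $j$ let $t_j$ be the minimal time $l\ge 0$ such that $\langle j,l\rangle\not\rightsquigarrow_r\theta$. Then there exists a run $r'$ with $r'\approx r$ such that for every process $j$: $r_j(m)=r'_j(m)$ for all $m\le t_j$, and $r_j(m)=r'_j(m+\Delta)$ for all $m\ge t_j+1$.
   Context: Model: $n$ processes connected by directed FIFO channels; an environment (adversary) schedules everything. Time is identified with the natural numbers; a run $r=r(0),r(1),\dots$ is an infinite sequence of global states, $r_i(m)$ denotes process $i$'s local state at time $m$, and round $m+1$ transforms $r(m)$ into $r(m+1)$. In each round the environment chooses independently for each process $i$ one of: $\mathtt{move}_i$ ($i$ performs an action allowed by its protocol at its current local state — a local action or sending a message), $\mathtt{skip}_i$ (nothing happens to $i$), $\mathtt{invoke}_i(x)$ ($i$ receives external input $x$), or $\mathtt{deliver}_i$ of a message from some $j$ (delivered if it is the oldest message in transit on the channel from $j$ to $i$). The local state of a process consists of its initial value together with the complete ordered history of all actions it performed, messages it sent and received, and inputs it received. A run of protocol $P=(P_1,\dots,P_n)$ starts in an initial global state and every action performed by every process $i$ is among those allowed by $P_i$ at $i$'s current local state. A node is a process-time pair $\langle p,t\rangle$. Message chains: $\langle p,t\rangle\rightsquigarrow_r\langle q,t'\rangle$ holds if (1a) $p=q$ and $t<t'$, or (1b) $p$ sends a message to $q$ in round $t+1$ of $r$ that is delivered no later than round $t'$, or (2) there is a node $\theta''$ with $\langle p,t\rangle\rightsquigarrow_r\theta''$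 and $\theta''\rightsquigarrow_r\langle q,t'\rangle$. Two runs are locally equivalent, $r\approx r'$, if for every process $j$, a local state of $j$ appears in $r$ iff it appears in $r'$. *)

theory Defs
  imports Main
begin

datatype ('a, 'm, 'p) action = LocalAct 'a | SendAct 'p 'm

datatype ('a, 'm, 'x, 'p) event =
    EAct 'a | ESend 'p 'm | ERecv 'p 'm | EInput 'x

datatype ('v, 'a, 'm, 'x, 'p) lstate =
  LS (init: 'v) (hist: "('a, 'm, 'x, 'p) event list")

type_synonym ('v, 'a, 'm, 'x, 'p) gstate = "'p \<Rightarrow> ('v, 'a, 'm, 'x, 'p) lstate"
type_synonym ('v, 'a, 'm, 'x, 'p) run = "nat \<Rightarrow> ('v, 'a, 'm, 'x, 'p) gstate"

type_synonym ('v, 'a, 'm, 'x, 'p) protocol =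
  "'p \<Rightarrow> ('v, 'a, 'm, 'x, 'p) lstate \<Rightarrow> ('a, 'm, 'p) action set"

datatype ('x, 'p) env_choice = Move | Skip | Invoke 'x | Deliver 'p

fun add_event :: "('v, 'a, 'm, 'x, 'p) lstate \<Rightarrow> ('a, 'm, 'x, 'p) event \<Rightarrow> ('v, 'a, 'm, 'x, 'p) lstate" where
  "add_event (LS v h) e = LS v (h @ [e])"

fun event_of_action :: "('a, 'm, 'p) action \<Rightarrow> ('a, 'm, 'x, 'p) event" where
  "event_of_action (LocalAct a) = EAct a"
| "event_of_action (SendAct q m) = ESend q m"

definition sent_msgs :: "('v, 'a, 'm, 'x, 'p) gstate \<Rightarrow> 'p \<Rightarrow> 'p \<Rightarrow> 'm list" where
  "sent_msgs g j i = concat (map (\<lambda>e. case e of ESend q m \<Rightarrow> if q = i then [m] else [] | _ \<Rightarrow> []) (hist (g j)))"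

definition recvd_msgs :: "('v, 'a, 'm, 'x, 'p) gstate \<Rightarrow> 'p \<Rightarrow> 'p \<Rightarrow> 'm list" where
  "recvd_msgs g i j = concat (map (\<lambda>e. case e of ERecv q m \<Rightarrow> if q = j then [m] else [] | _ \<Rightarrow> []) (hist (g i)))"

text \<open>Messages in transit on the FIFO channel from j to i (oldest first).\<close>
definition in_transit :: "('v, 'a, 'm, 'x, 'p) gstate \<Rightarrow> 'p \<Rightarrow> 'p \<Rightarrow> 'm list" where
  "in_transit g j i = drop (length (recvd_msgs g i j)) (sent_msgs g j i)"

fun proc_step :: "('v, 'a, 'm, 'x, 'p) protocol \<Rightarrow> ('v, 'a, 'm, 'x, 'p) gstate \<Rightarrow> 'p
    \<Rightarrow> ('x, 'p) env_choice \<Rightarrow> ('v, 'a, 'm, 'x, 'p) lstate \<Rightarrow> bool" where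
  "proc_step P g i Skip s' = (s' = g i)"
| "proc_step P g i Move s' = (\<exists>act \<in> P i (g i). s' = add_event (g i) (event_of_action act))"
| "proc_step P g i (Invoke x) s' = (s' = add_event (g i) (EInput x))"
| "proc_step P g i (Deliver j) s' =
     (if in_transit g j i = [] then s' = g i
      else s' = add_event (g i) (ERecv j (hd (in_transit g j i))))"

definition is_run :: "('v, 'a, 'm, 'x, 'p) protocol \<Rightarrow> ('v, 'a, 'm, 'x, 'p) run \<Rightarrow> bool" where
  "is_run P r \<longleftrightarrow> (\<forall>i. hist (r 0 i) = []) \<and>
     (\<forall>m. \<exists>c :: 'p \<Rightarrow> ('x, 'p) env_choice. \<forall>i. proc_step P (r m) i (c i) (r (Suc m) i))"

text \<open>Process p sends (its k-th message to q, counting from 0) in round t+1.\<close>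
definition sends_in_round :: "('v, 'a, 'm, 'x, 'p) run \<Rightarrow> 'p \<Rightarrow> 'p \<Rightarrow> nat \<Rightarrow> nat \<Rightarrow> bool" where
  "sends_in_round r p q t k \<longleftrightarrow>
     length (sent_msgs (r t) p q) = k \<and> length (sent_msgs (r (Suc t)) p q) > k"

text \<open>Message chains (Lamport's happened-before on nodes).\<close>
inductive msg_chain :: "('v, 'a, 'm, 'x, 'p) run \<Rightarrow> 'p \<times> nat \<Rightarrow> 'p \<times> nat \<Rightarrow> bool"
  for r where
  local: "t < t' \<Longrightarrow> msg_chain r (p, t) (p, t')"
| msg: "sends_in_round r p q t k \<Longrightarrow> length (recvd_msgs (r t') q p) > k
          \<Longrightarrow> msg_chain r (p, t) (q, t')"
| trans: "msg_chain r a b \<Longrightarrow> msg_chain r b c \<Longrightarrow> msg_chain r a c"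

definition loc_equiv :: "('v, 'a, 'm, 'x, 'p) run \<Rightarrow> ('v, 'a, 'm, 'x, 'p) run \<Rightarrow> bool" where
  "loc_equiv r r' \<longleftrightarrow> (\<forall>j. (\<forall>s. (\<exists>m. r m j = s) \<longleftrightarrow> (\<exists>m. r' m j = s)))"

definition t_min :: "('v, 'a, 'm, 'x, 'p) run \<Rightarrow> 'p \<times> nat \<Rightarrow> 'p \<Rightarrow> nat" where
  "t_min r \<theta> j = (LEAST l. \<not> msg_chain r (j, l) \<theta>)"

end

theory Submission
  imports Defs "HOL-Library.Sublist"
begin

(* Let T j = t_min r \<theta> j. The run r' lets every process j follow r, except that it idles for
   \<Delta> rounds in the local state r_j(T j) and afterwards replays r shifted by \<Delta>. Each process goes
   through the same local states as in r, so r' is locally equivalent to r; what must be checked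
   is that every delivery of r' is still possible, i.e. that the sender had already sent the
   message in r'. After its pause the receiver is \<Delta> rounds late and no sender is later than
   that. Before its pause, say j receives in round n+1 \<le> T j a message that k sent in round s+1;
   then <k,s> reaches <j,n+1>, and <j,n+1> either reaches \<theta> or is \<theta> itself (otherwise <j,n>
   could only reach \<theta> through a send of j in round n+1, but j receives in that round). Hence
   s < T k, so k sent the message in r' before its own pause. *)

definition sent_to :: "('v, 'a, 'm, 'x, 'p) lstate \<Rightarrow> 'p \<Rightarrow> 'm list" where
  "sent_to s i =
    concat (map (\<lambda>e. case e of ESend q m \<Rightarrow> if q = i then [m] else [] | _ \<Rightarrow> []) (hist s))"

definition received_from :: "('v, 'a, 'm, 'x, 'p) lstate \<Rightarrow> 'p \<Rightarrow> 'm list" where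
  "received_from s j =
    concat (map (\<lambda>e. case e of ERecv q m \<Rightarrow> if q = j then [m] else [] | _ \<Rightarrow> []) (hist s))"

lemma sent_msgs_eq_sent_to [simp]: "sent_msgs g j i = sent_to (g j) i"
  by (simp add: sent_msgs_def sent_to_def)

lemma recvd_msgs_eq_received_from [simp]: "recvd_msgs g i j = received_from (g i) j"
  by (simp add: recvd_msgs_def received_from_def)

lemma hist_add_event [simp]: "hist (add_event s e) = hist s @ [e]"
  by (cases s) simp

lemma sent_to_add_ERecv [simp]: "sent_to (add_event s (ERecv k x)) i = sent_to s i"
  by (simp add: sent_to_def)

lemma received_from_add_ERecv [simp]:
  "received_from (add_event s (ERecv k x)) k = received_from s k @ [x]"
  by (simp add: received_from_def)

lemma sent_to_mono: "prefix (hist s) (hist s') \<Longrightarrow> prefix (sent_to s i) (sent_to s' i)"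
  by (auto simp: sent_to_def elim!: prefixE)

lemma prefix_nth_eq: "prefix xs ys \<Longrightarrow> n < length xs \<Longrightarrow> xs ! n = ys ! n"
  by (auto simp: nth_append elim!: prefixE)

definition legal_step :: "('v, 'a, 'm, 'x, 'p) protocol \<Rightarrow> ('v, 'a, 'm, 'x, 'p) gstate \<Rightarrow> 'p
    \<Rightarrow> ('v, 'a, 'm, 'x, 'p) lstate \<Rightarrow> bool" where
  "legal_step P g j s' \<longleftrightarrow> (\<exists>c. proc_step P g j c s')"

lemma is_run_iff_legal_steps:
  "is_run P r \<longleftrightarrow> (\<forall>i. hist (r 0 i) = []) \<and> (\<forall>m j. legal_step P (r m) j (r (Suc m) j))"
  unfolding is_run_def legal_step_def by (metis choice)

lemma legal_step_hist:
  "legal_step P g j s' \<Longrightarrow> hist s' = hist (g j) \<or> (\<exists>e. hist s' = hist (g j) @ [e])"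
  unfolding legal_step_def by (auto elim!: proc_step.elims split: if_splits)

lemma legal_step_received_from:
  assumes "legal_step P g q s'"
  shows "received_from s' p = received_from (g q) p \<or>
    (in_transit g p q \<noteq> [] \<and> received_from s' p = received_from (g q) p @ [hd (in_transit g p q)])"
proof -
  obtain c where "proc_step P g q c s'" using assms unfolding legal_step_def by blast
  then show ?thesis
  proof (cases c)
    case Move
    with \<open>proc_step P g q c s'\<close> obtain act where "s' = add_event (g q) (event_of_action act)"
      by auto
    then show ?thesis by (cases act) (simp_all add: received_from_def)
  qed (auto simp: received_from_def split: if_splits)
qed

lemma legal_step_transfer:
  assumes "legal_step P g j s'" "g' j = g j"
    and "\<And>k. in_transit g k j \<noteq> [] \<Longrightarrow> s' = add_event (g j) (ERecv k (hd (in_transit g k j)))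
      \<Longrightarrow> in_transit g' k j \<noteq> [] \<and> hd (in_transit g' k j) = hd (in_transit g k j)"
  shows "legal_step P g' j s'"
proof -
  obtain c where c: "proc_step P g j c s'" using assms(1) unfolding legal_step_def by blast
  show ?thesis
  proof (cases c)
    case (Deliver k)
    show ?thesis
    proof (cases "in_transit g k j = []")
      case True
      then have "proc_step P g' j Skip s'" using c Deliver assms(2) by simp
      then show ?thesis unfolding legal_step_def by blast
    next
      case False
      then have "proc_step P g' j (Deliver k) s'" using c Deliver assms by simp
      then show ?thesis unfolding legal_step_def by blast
    qed
  qed (use c assms(2) in \<open>auto simp: legal_step_def intro!: exI[of _ c]\<close>)
qed

lemma run_hist_prefix:
  assumes "is_run P r" "m \<le> m'"
  shows "prefix (hist (r m j)) (hist (r m' j))"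
  using assms(2)
proof (induction m' rule: dec_induct)
  case (step n)
  have "legal_step P (r n) j (r (Suc n) j)" using assms(1) by (simp add: is_run_iff_legal_steps)
  then have "prefix (hist (r n j)) (hist (r (Suc n) j))" by (auto dest: legal_step_hist)
  with step.IH show ?case by (rule prefix_order.trans)
qed simp

lemma run_sent_to_prefix:
  "is_run P r \<Longrightarrow> m \<le> m' \<Longrightarrow> prefix (sent_to (r m j) i) (sent_to (r m' j) i)"
  by (rule sent_to_mono) (rule run_hist_prefix)

lemma run_sent_to_nth_eq:
  assumes "is_run P r" "L < length (sent_to (r m k) j)" "L < length (sent_to (r m' k) j)"
  shows "sent_to (r m k) j ! L = sent_to (r m' k) j ! L"
  using run_sent_to_prefix[OF assms(1)] prefix_nth_eq assms(2,3) nat_le_linear by metis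

lemma run_sent_to_length_Suc:
  assumes "is_run P r"
  shows "length (sent_to (r (Suc m) j) i) \<le> Suc (length (sent_to (r m j) i))"
proof -
  have "legal_step P (r m) j (r (Suc m) j)" using assms by (simp add: is_run_iff_legal_steps)
  then consider "hist (r (Suc m) j) = hist (r m j)"
    | e where "hist (r (Suc m) j) = hist (r m j) @ [e]"
    by (auto dest: legal_step_hist)
  then show ?thesis by cases (auto simp: sent_to_def split: event.split)
qed

lemma run_received_from_prefix:
  assumes "is_run P r"
  shows "prefix (received_from (r m q) p) (sent_to (r m p) q)"
proof (induction m)
  case 0
  then show ?case using assms by (simp add: is_run_iff_legal_steps received_from_def)
next
  case (Suc m)
  have "legal_step P (r m) q (r (Suc m) q)" using assms by (simp add: is_run_iff_legal_steps)
  then have "received_from (r (Suc m) q) p = received_from (r m q) p \<or>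
      (in_transit (r m) p q \<noteq> [] \<and>
       received_from (r (Suc m) q) p = received_from (r m q) p @ [hd (in_transit (r m) p q)])"
    by (rule legal_step_received_from)
  moreover have "prefix (received_from (r m q) p @ in_transit (r m) p q) (sent_to (r m p) q)"
    using Suc.IH by (auto simp: in_transit_def elim!: prefixE)
  ultimately have "prefix (received_from (r (Suc m) q) p) (sent_to (r m p) q)"
    using Suc.IH by (auto simp: neq_Nil_conv)
      (metis append_Cons append_Nil append_assoc append_prefixD)
  then show ?case
    using run_sent_to_prefix[OF assms, of m "Suc m"] by (auto intro: prefix_order.trans)
qed

lemma run_received_from_length_Suc:
  assumes "is_run P r"
  shows "length (received_from (r (Suc m) q) p) \<le> length (sent_to (r m p) q)"
proof -
  have "legal_step P (r m) q (r (Suc m) q)" using assms by (simp add: is_run_iff_legal_steps)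
  then have "received_from (r (Suc m) q) p = received_from (r m q) p \<or>
      (in_transit (r m) p q \<noteq> [] \<and>
       received_from (r (Suc m) q) p = received_from (r m q) p @ [hd (in_transit (r m) p q)])"
    by (rule legal_step_received_from)
  then show ?thesis
    using prefix_length_le[OF run_received_from_prefix[OF assms, of m q p]]
    by (auto simp: in_transit_def)
qed

lemma run_sends_in_round_exists:
  assumes "is_run P r" "L < length (sent_to (r n k) j)"
  shows "\<exists>s<n. sends_in_round r k j s L"
  using assms(2)
proof (induction n)
  case 0
  then show ?case using assms(1) by (simp add: is_run_iff_legal_steps sent_to_def)
next
  case (Suc n)
  show ?case
  proof (cases "L < length (sent_to (r n k) j)")
    case True
    then show ?thesis using Suc.IH less_SucI by blast
  next
    case False
    then have "sends_in_round r k j n L"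
      using Suc.prems run_sent_to_length_Suc[OF assms(1), of n k j]
      by (simp add: sends_in_round_def)
    then show ?thesis by blast
  qed
qed

lemma msg_chain_time_less:
  assumes "is_run P r" "msg_chain r a b"
  shows "snd a < snd b"
  using assms(2)
proof (induction rule: msg_chain.induct)
  case (msg p q t k t')
  show ?case
  proof (cases t')
    case 0
    then show ?thesis
      using msg.hyps(2) assms(1) by (simp add: is_run_iff_legal_steps received_from_def)
  next
    case (Suc t'')
    then have "k < length (sent_to (r t'' p) q)"
      using msg.hyps(2) run_received_from_length_Suc[OF assms(1), of t'' q p] by simp
    moreover have "length (sent_to (r t p) q) = k"
      using msg.hyps(1) by (simp add: sends_in_round_def)
    ultimately have "\<not> t'' \<le> t"
      using prefix_length_le[OF run_sent_to_prefix[OF assms(1), of t'' t p q]] by linarith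
    then show ?thesis using Suc by simp
  qed
qed auto

lemma msg_chain_first_step:
  assumes "msg_chain r (p, t) b"
  shows "(\<exists>t'. b = (p, t') \<and> t < t') \<or>
    (\<exists>l q k. t \<le> l \<and> sends_in_round r p q l k \<and> msg_chain r (p, l) b)"
  using assms
proof (induction "(p, t)" b arbitrary: p t rule: msg_chain.induct)
  case (trans b c)
  from trans.hyps(2) show ?case
  proof (elim disjE exE conjE)
    fix t' assume "b = (p, t')" "t < t'"
    from trans.hyps(4)[OF \<open>b = (p, t')\<close>] show ?thesis
    proof (elim disjE exE conjE)
      fix l q k assume "t' \<le> l" "sends_in_round r p q l k" "msg_chain r (p, l) c"
      then show ?thesis using \<open>t < t'\<close> by (meson less_imp_le order.trans)
    qed (use \<open>t < t'\<close> in auto)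
  next
    fix l q k assume "t \<le> l" "sends_in_round r p q l k" "msg_chain r (p, l) b"
    then show ?thesis using trans.hyps(3) msg_chain.trans by blast
  qed
qed (force intro: msg_chain.msg)+

lemma msg_chain_iff_less_t_min:
  assumes "is_run P r"
  shows "msg_chain r (j, l) \<theta> \<longleftrightarrow> l < t_min r \<theta> j"
proof
  have "\<not> msg_chain r (j, snd \<theta>) \<theta>" using msg_chain_time_less[OF assms] by fastforce
  then have not_chain: "\<not> msg_chain r (j, t_min r \<theta> j) \<theta>"
    unfolding t_min_def by (rule LeastI)
  assume "msg_chain r (j, l) \<theta>"
  then show "l < t_min r \<theta> j"
    using not_chain msg_chain.local msg_chain.trans by (metis linorder_neqE_nat)
next
  show "l < t_min r \<theta> j \<Longrightarrow> msg_chain r (j, l) \<theta>"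
    unfolding t_min_def using not_less_Least by blast
qed

text \<open>If j sends nothing in round n+1, then <j,n+1> is \<theta> or reaches \<theta>: a chain from <j,n>
  to \<theta> can leave j only through a send in round n+1 or later.\<close>
lemma less_t_min_if_chain_to_silent_step:
  assumes run: "is_run P r"
    and chain: "msg_chain r (k, s) (j, Suc n)"
    and before: "n < t_min r \<theta> j"
    and silent: "\<And>q. sent_to (r (Suc n) j) q = sent_to (r n j) q"
  shows "s < t_min r \<theta> k"
proof -
  have "msg_chain r (j, n) \<theta>" using before msg_chain_iff_less_t_min[OF run] by blast
  then have "\<theta> = (j, Suc n) \<or> msg_chain r (j, Suc n) \<theta>"
  proof (rule msg_chain_first_step[THEN disjE]; elim exE conjE)
    fix t' assume "\<theta> = (j, t')" "n < t'"
    then show ?thesis using msg_chain.local[of "Suc n" t' r j] by (cases "t' = Suc n") auto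
  next
    fix l q kk assume "n \<le> l" "sends_in_round r j q l kk" "msg_chain r (j, l) \<theta>"
    moreover have "l \<noteq> n"
      using \<open>sends_in_round r j q l kk\<close> silent by (auto simp: sends_in_round_def)
    ultimately have "l = Suc n \<or> msg_chain r (j, Suc n) (j, l)" by (auto intro: msg_chain.local)
    with \<open>msg_chain r (j, l) \<theta>\<close> show ?thesis by (metis msg_chain.trans)
  qed
  then have "msg_chain r (k, s) \<theta>" using chain msg_chain.trans by blast
  then show ?thesis using msg_chain_iff_less_t_min[OF run] by blast
qed

lemma delivered_message_send_round:
  assumes run: "is_run P r"
    and transit: "in_transit (r n) k j \<noteq> []"
    and recv: "r (Suc n) j = add_event (r n j) (ERecv k x)"
  obtains s where "s < n" "sends_in_round r k j s (length (received_from (r n j) k))"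
    and "n < t_min r \<theta> j \<Longrightarrow> s < t_min r \<theta> k"
proof -
  let ?L = "length (received_from (r n j) k)"
  have "?L < length (sent_to (r n k) j)" using transit by (simp add: in_transit_def)
  then obtain s where s: "s < n" "sends_in_round r k j s ?L"
    using run_sends_in_round_exists[OF run] by blast
  have "msg_chain r (k, s) (j, Suc n)"
    using s(2) recv by (intro msg_chain.msg[of r k j s ?L]) simp_all
  then have "n < t_min r \<theta> j \<Longrightarrow> s < t_min r \<theta> k"
    using less_t_min_if_chain_to_silent_step[OF run] recv by simp
  with s that show ?thesis by blast
qed

lemma in_transit_hd_eq_if_sent:
  assumes run: "is_run P r"
    and states: "g j = r n j" "g k = r F k"
    and transit: "in_transit (r n) k j \<noteq> []"
    and sent: "length (received_from (r n j) k) < length (sent_to (r F k) j)"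
  shows "in_transit g k j \<noteq> [] \<and> hd (in_transit g k j) = hd (in_transit (r n) k j)"
  using states transit sent run_sent_to_nth_eq[OF run, of _ F k j n]
  by (simp add: in_transit_def hd_drop_conv_nth)

definition pause_at :: "nat \<Rightarrow> nat \<Rightarrow> nat \<Rightarrow> nat" where
  "pause_at T \<Delta> m = (if m \<le> T then m else if m < T + \<Delta> then T else m - \<Delta>)"

lemma surj_pause_at: "surj (pause_at T \<Delta>)"
proof (rule surjI)
  fix m
  show "pause_at T \<Delta> (if m \<le> T then m else m + \<Delta>) = m" by (simp add: pause_at_def)
qed

lemma pause_at_Suc_during_pause:
  "T \<le> m \<Longrightarrow> m < T + \<Delta> \<Longrightarrow> pause_at T \<Delta> (Suc m) = pause_at T \<Delta> m"
  unfolding pause_at_def by presburger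

lemma pause_at_Suc_outside_pause:
  assumes "\<not> (T \<le> m \<and> m < T + \<Delta>)"
  shows "pause_at T \<Delta> (Suc m) = Suc (pause_at T \<Delta> m)"
    and "m < T \<and> pause_at T \<Delta> m = m \<or> T + \<Delta> \<le> m \<and> pause_at T \<Delta> m = m - \<Delta>"
  using assms unfolding pause_at_def by auto

lemma pause_at_ge: "m - \<Delta> \<le> pause_at T \<Delta> m" "min m T \<le> pause_at T \<Delta> m"
  by (auto simp: pause_at_def)

definition delayed_run ::
    "('v, 'a, 'm, 'x, 'p) run \<Rightarrow> ('p \<Rightarrow> nat) \<Rightarrow> nat \<Rightarrow> ('v, 'a, 'm, 'x, 'p) run" where
  "delayed_run r T \<Delta> = (\<lambda>m j. r (pause_at (T j) \<Delta> m) j)"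

lemma loc_equiv_reindex:
  assumes "\<And>j. surj (f j)"
  shows "loc_equiv r (\<lambda>m j. r (f j m) j)"
  unfolding loc_equiv_def
proof (intro allI iffI)
  fix j s
  assume "\<exists>m. r m j = s"
  then obtain m where "r m j = s" by blast
  moreover obtain m' where "f j m' = m" using assms[of j] by (metis surjD)
  ultimately show "\<exists>m. r (f j m) j = s" by blast
qed blast

lemma is_run_delayed_run:
  assumes run: "is_run P r"
  shows "is_run P (delayed_run r (t_min r \<theta>) \<Delta>)"
proof -
  let ?T = "t_min r \<theta>"
  define r' where "r' = delayed_run r ?T \<Delta>"
  have "legal_step P (r' m) j (r' (Suc m) j)" for m j
  proof (cases "?T j \<le> m \<and> m < ?T j + \<Delta>")
    case True
    then have "r' (Suc m) j = r' m j"
      by (simp add: r'_def delayed_run_def pause_at_Suc_during_pause)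
    then show ?thesis by (auto simp: legal_step_def intro: exI[of _ Skip])
  next
    case False
    define n where "n = pause_at (?T j) \<Delta> m"
    have phase: "m < ?T j \<and> n = m \<or> ?T j + \<Delta> \<le> m \<and> n = m - \<Delta>"
      and states: "r' m j = r n j" "r' (Suc m) j = r (Suc n) j"
      using pause_at_Suc_outside_pause[OF False] by (simp_all add: n_def r'_def delayed_run_def)
    have "legal_step P (r n) j (r (Suc n) j)" using run by (simp add: is_run_iff_legal_steps)
    then have "legal_step P (r' m) j (r (Suc n) j)"
    proof (rule legal_step_transfer)
      show "r' m j = r n j" by (fact states(1))
      fix k
      assume transit: "in_transit (r n) k j \<noteq> []"
        and "r (Suc n) j = add_event (r n j) (ERecv k (hd (in_transit (r n) k j)))"
      then obtain s where s: "s < n" "sends_in_round r k j s (length (received_from (r n j) k))"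
        "n < ?T j \<Longrightarrow> s < ?T k"
        using delivered_message_send_round[OF run, where \<theta> = \<theta>] by blast
      have "Suc s \<le> pause_at (?T k) \<Delta> m"
        using phase s(1,3) pause_at_ge[where T = "?T k" and \<Delta> = \<Delta> and m = m] by auto
      let ?F = "pause_at (?T k) \<Delta> m"
      have "length (sent_to (r (Suc s) k) j) \<le> length (sent_to (r ?F k) j)"
        using \<open>Suc s \<le> ?F\<close> by (intro prefix_length_le run_sent_to_prefix[OF run])
      with s(2) have "length (received_from (r n j) k) < length (sent_to (r ?F k) j)"
        by (simp add: sends_in_round_def)
      with transit show
        "in_transit (r' m) k j \<noteq> [] \<and> hd (in_transit (r' m) k j) = hd (in_transit (r n) k j)"
        by (intro in_transit_hd_eq_if_sent[OF run, where g = "r' m" and n = n and F = ?F])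
          (simp_all add: r'_def delayed_run_def n_def)
    qed
    then show ?thesis using states(2) by simp
  qed
  moreover have "hist (r' 0 i) = []" for i
    using run by (simp add: r'_def delayed_run_def pause_at_def is_run_iff_legal_steps)
  ultimately show ?thesis by (simp add: is_run_iff_legal_steps r'_def)
qed

theorem theorem6:
  fixes P :: "('v, 'a, 'm, 'x, 'p::finite) protocol"
    and r :: "('v, 'a, 'm, 'x, 'p) run"
    and \<theta> :: "'p \<times> nat"
    and \<Delta> :: nat
  assumes "is_run P r"
    and "\<Delta> > 0"
  shows "\<exists>r'. is_run P r' \<and> loc_equiv r r' \<and>
           (\<forall>j. (\<forall>m \<le> t_min r \<theta> j. r m j = r' m j) \<and>
                (\<forall>m \<ge> t_min r \<theta> j + 1. r m j = r' (m + \<Delta>) j))"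
proof -
  define r' where "r' = delayed_run r (t_min r \<theta>) \<Delta>"
  have "is_run P r'" unfolding r'_def using assms(1) by (rule is_run_delayed_run)
  moreover have "loc_equiv r r'"
    unfolding r'_def delayed_run_def by (rule loc_equiv_reindex) (rule surj_pause_at)
  moreover have "(\<forall>m \<le> t_min r \<theta> j. r m j = r' m j) \<and>
      (\<forall>m \<ge> t_min r \<theta> j + 1. r m j = r' (m + \<Delta>) j)" for j
    by (simp add: r'_def delayed_run_def pause_at_def)
  ultimately show ?thesis by blast
qed

end
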